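(* Let $d\ge2$, $\omega:=\frac1{\sqrt d}\sum_{i=1}^de_i\otimes e_i$, $P_\omega:=\omega\omega^\ast$, and for $\alpha\in[1,d]$ let $f_d(\alpha):=\mu_\alpha(P_\omega)$ and $t^\ast_\alpha:=\frac{k+\theta^2}{(k+\theta)^2}$, where $k=\lfloor\alpha\rfloor$, $\theta=\alpha-k$. Then $f_d(\alpha)=\frac{1}{d\,t^\ast_\alpha}$ for every $\alpha\in[1,d]$. In particular, along the maps $\Phi_t(X)=\mathrm{Tr}(X)I_d-tX$, $t\in(0,1]$, one has $\Phi_t\in\mathsf P_\alpha$ if and only if $t\le 1/(d f_d(\alpha))$.
   Context: Schmidt coefficients $s_1(\psi)\ge\dots\ge s_d(\psi)\ge0$ of $\psi=\sum a_{ij}e_i\otimes e_j\in\mathbb C^d\otimes\mathbb C^d$ are the singular values of $[a_{ij}]$. For $\alpha\in[1,d]$ with $k=\lfloor\alpha\rfloor$, $\theta=\alpha-k$, $r=\lceil\alpha\rceil$, a unit vector $\psi$ is $\alpha$-admissible if $s_j(\psi)=0$ for $j\ge r+1$ and, when $\theta>0$, $s_{k+1}(\psi)\le\frac\theta k\sum_{j=1}^ks_j(\psi)$; $\mathcal V_\alpha$ is the set of these. For Hermitian $W$, $\mu_\alpha(W):=\max\{\langle\psi,W\psi\rangle:\psi\in\mathcal V_\alpha\}$. The Choi matrix is $C_\Phi=\sum_{i,j}E_{ij}\otimes\Phi(E_{ij})$, and a Hermitian-preserving $\Phi$ is in $\mathsf P_\alpha$ if $\langle\psi,C_\Phi\psi\rangle\ge0$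 for all $\psi\in\mathcal V_\alpha$. *)

theory Defs
  imports "Jordan_Normal_Form.Schur_Decomposition"
begin

text \<open>Vectors of C^d (x) C^d are complex vectors of dimension d*d; the basis vector
  e_i (x) e_j has index i*d+j. Operators on C^d (x) C^d are (d*d) x (d*d) matrices.\<close>

definition coeff_mat :: "nat \<Rightarrow> complex vec \<Rightarrow> complex mat" where
  "coeff_mat d \<psi> = mat d d (\<lambda>(i,j). \<psi> $ (i*d+j))"

text \<open>Schmidt coefficients: the singular values of the coefficient matrix, listed in
  non-increasing order, with multiplicity, i.e. the list (s_1,...,s_d) of non-negative reals
  whose squares are the roots (with multiplicity) of the characteristic polynomial of A^* A.\<close>

definition schmidt_list :: "nat \<Rightarrow> complex vec \<Rightarrow> real list" where
  "schmidt_list d \<psi> = (THE ls. length ls = d \<and> sorted_wrt (\<ge>) ls \<and> (\<forall>s\<in>set ls. s \<ge> 0) \<and>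
      char_poly (mat_adjoint (coeff_mat d \<psi>) * coeff_mat d \<psi>)
        = (\<Prod>s\<leftarrow>ls. [:- complex_of_real (s^2), 1:]))"

text \<open>s_j(psi), 1-based index, j in {1..d}.\<close>
definition schmidt :: "nat \<Rightarrow> complex vec \<Rightarrow> nat \<Rightarrow> real" where
  "schmidt d \<psi> j = schmidt_list d \<psi> ! (j - 1)"

definition unit_vector :: "nat \<Rightarrow> complex vec \<Rightarrow> bool" where
  "unit_vector d \<psi> \<longleftrightarrow> \<psi> \<in> carrier_vec (d*d) \<and> (\<Sum>a<d*d. (cmod (\<psi> $ a))^2) = 1"

definition admissible :: "nat \<Rightarrow> real \<Rightarrow> complex vec \<Rightarrow> bool" where
  "admissible d \<alpha> \<psi> \<longleftrightarrow>
     (let k = nat \<lfloor>\<alpha>\<rfloor>; \<theta> = \<alpha> - real k; r = nat \<lceil>\<alpha>\<rceil> in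
       unit_vector d \<psi> \<and>
       (\<forall>j. r + 1 \<le> j \<and> j \<le> d \<longrightarrow> schmidt d \<psi> j = 0) \<and>
       (\<theta> > 0 \<longrightarrow> schmidt d \<psi> (k+1) \<le> \<theta> / real k * (\<Sum>j=1..k. schmidt d \<psi> j)))"

definition V :: "nat \<Rightarrow> real \<Rightarrow> complex vec set" where
  "V d \<alpha> = {\<psi>. admissible d \<alpha> \<psi>}"

definition qform :: "nat \<Rightarrow> complex mat \<Rightarrow> complex vec \<Rightarrow> complex" where
  "qform d W \<psi> = (\<Sum>a<d*d. \<Sum>b<d*d. cnj (\<psi> $ a) * W $$ (a,b) * \<psi> $ b)"

text \<open>mu_alpha(W) = max over V_alpha of <psi, W psi> (real, as W is Hermitian); the
  maximum is written as a supremum (it is attained, V_alpha being compact and nonempty).\<close>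
definition mu :: "nat \<Rightarrow> real \<Rightarrow> complex mat \<Rightarrow> real" where
  "mu d \<alpha> W = Sup ((\<lambda>\<psi>. Re (qform d W \<psi>)) ` V d \<alpha>)"

definition omega :: "nat \<Rightarrow> complex vec" where
  "omega d = vec (d*d) (\<lambda>a. if a div d = a mod d then complex_of_real (1 / sqrt (real d)) else 0)"

definition P_omega :: "nat \<Rightarrow> complex mat" where
  "P_omega d = mat (d*d) (d*d) (\<lambda>(a,b). omega d $ a * cnj (omega d $ b))"

definition f_d :: "nat \<Rightarrow> real \<Rightarrow> real" where
  "f_d d \<alpha> = mu d \<alpha> (P_omega d)"

definition t_star :: "real \<Rightarrow> real" where
  "t_star \<alpha> = (let k = real_of_int \<lfloor>\<alpha>\<rfloor>; \<theta> = \<alpha> - k in (k + \<theta>^2) / (k + \<theta>)^2)"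

definition matunit :: "nat \<Rightarrow> nat \<Rightarrow> nat \<Rightarrow> complex mat" where
  "matunit d i j = mat d d (\<lambda>(a,b). if a = i \<and> b = j then 1 else 0)"

definition choi :: "nat \<Rightarrow> (complex mat \<Rightarrow> complex mat) \<Rightarrow> complex mat" where
  "choi d \<Phi> = mat (d*d) (d*d) (\<lambda>(p,q). \<Phi> (matunit d (p div d) (q div d)) $$ (p mod d, q mod d))"

definition hermitian_mat :: "complex mat \<Rightarrow> bool" where
  "hermitian_mat X \<longleftrightarrow> mat_adjoint X = X"

definition hermitian_preserving :: "nat \<Rightarrow> (complex mat \<Rightarrow> complex mat) \<Rightarrow> bool" where
  "hermitian_preserving d \<Phi> \<longleftrightarrow> (\<forall>X \<in> carrier_mat d d. hermitian_mat X \<longrightarrow>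
       \<Phi> X \<in> carrier_mat d d \<and> hermitian_mat (\<Phi> X))"

definition P_class :: "nat \<Rightarrow> real \<Rightarrow> (complex mat \<Rightarrow> complex mat) set" where
  "P_class d \<alpha> = {\<Phi>. hermitian_preserving d \<Phi> \<and> (\<forall>\<psi>\<in>V d \<alpha>. Re (qform d (choi d \<Phi>) \<psi>) \<ge> 0)}"

definition mtrace :: "nat \<Rightarrow> complex mat \<Rightarrow> complex" where
  "mtrace d X = (\<Sum>i<d. X $$ (i,i))"

definition Phi_t :: "nat \<Rightarrow> real \<Rightarrow> complex mat \<Rightarrow> complex mat" where
  "Phi_t d t X = mtrace d X \<cdot>\<^sub>m 1\<^sub>m d - complex_of_real t \<cdot>\<^sub>m X"

end

theory Submission
  imports Defs "HOL-Analysis.L2_Norm" "HOL-Analysis.Convex"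
begin

(* Let A be the d x d coefficient matrix of psi. Then <psi, P_omega psi> = |tr A|^2 / d, and
   |tr A| is at most the sum of the Schmidt coefficients: if a unitary U diagonalises A^* A, the
   columns of A U are orthogonal with norms s_j, and tr A = tr ((A U) U^* ) is bounded column by
   column with Cauchy-Schwarz. For an alpha-admissible unit vector only s_1, ..., s_(k+1) can be
   nonzero and s_(k+1) <= theta/k (s_1 + ... + s_k); Cauchy-Schwarz on the first k coefficients
   and a quadratic inequality in s_(k+1) give (s_1 + ... + s_d)^2 <= (k+theta)^2/(k+theta^2),
   which is 1/t*. Equality holds for the diagonal vector with k coefficients 1/N and one
   coefficient theta/N, where N^2 = k + theta^2. Finally the Choi matrix of Phi_t is
   I - t d P_omega, so Phi_t lies in P_alpha iff t d f_d(alpha) <= 1. *)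

section \<open>Unitary diagonalisation of Hermitian matrices\<close>

lemma mat_adjoint_dim [simp]:
  "dim_row (mat_adjoint A) = dim_col A" "dim_col (mat_adjoint A) = dim_row A"
  unfolding mat_adjoint_def by auto

lemma mat_adjoint_carrier [simp]: "A \<in> carrier_mat n m \<Longrightarrow> mat_adjoint A \<in> carrier_mat m n"
  unfolding carrier_mat_def by auto

lemma mat_adjoint_index [simp]:
  "i < dim_col A \<Longrightarrow> j < dim_row A \<Longrightarrow> mat_adjoint (A :: complex mat) $$ (i,j) = cnj (A $$ (j,i))"
  unfolding mat_adjoint_def mat_of_rows_def by auto

lemma mat_adjoint_adjoint [simp]: "mat_adjoint (mat_adjoint (A :: complex mat)) = A"
  by (rule eq_matI) auto

lemma mat_adjoint_one [simp]: "mat_adjoint (1\<^sub>m n :: complex mat) = 1\<^sub>m n"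
  by (rule eq_matI) auto

lemma mat_adjoint_mult:
  assumes "(A :: complex mat) \<in> carrier_mat n m" "B \<in> carrier_mat m p"
  shows "mat_adjoint (A * B) = mat_adjoint B * mat_adjoint A"
proof (rule eq_matI)
  fix i j
  assume "i < dim_row (mat_adjoint B * mat_adjoint A)" "j < dim_col (mat_adjoint B * mat_adjoint A)"
  then have i: "i < p" and j: "j < n" using assms by auto
  have "mat_adjoint (A * B) $$ (i,j) = cnj (\<Sum>k<m. A $$ (j,k) * B $$ (k,i))"
    using assms i j by (simp add: scalar_prod_def atLeast0LessThan)
  also have "\<dots> = (\<Sum>k<m. cnj (B $$ (k,i)) * cnj (A $$ (j,k)))"
    by (simp add: mult.commute)
  also have "\<dots> = (mat_adjoint B * mat_adjoint A) $$ (i,j)"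
    using assms i j by (simp add: scalar_prod_def atLeast0LessThan)
  finally show "mat_adjoint (A * B) $$ (i,j) = (mat_adjoint B * mat_adjoint A) $$ (i,j)" .
qed (use assms in auto)

lemma assoc_mult_mat4:
  assumes "A \<in> carrier_mat n1 n2" "B \<in> carrier_mat n2 n3"
    and "C \<in> carrier_mat n3 n4" "D \<in> carrier_mat n4 n5"
  shows "(A * B) * (C * D) = A * (B * C) * D"
proof -
  have "(A * B) * (C * D) = A * (B * (C * D))"
    using assms by (meson assoc_mult_mat mult_carrier_mat)
  also have "B * (C * D) = (B * C) * D"
    using assms by (meson assoc_mult_mat[symmetric])
  also have "A * ((B * C) * D) = A * (B * C) * D"
    using assms by (meson assoc_mult_mat[symmetric] mult_carrier_mat)
  finally show ?thesis .
qed

lemma assoc_mult_mat5: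
  assumes "A \<in> carrier_mat n n" "B \<in> carrier_mat n n" "C \<in> carrier_mat n n" "D \<in> carrier_mat n n"
    "H \<in> carrier_mat n n"
  shows "(A * B) * H * (C * D) = A * (B * H * C) * D"
proof -
  have "(A * B) * H = A * (B * H)" using assms by (meson assoc_mult_mat)
  then show ?thesis
    using assoc_mult_mat4[OF assms(1) mult_carrier_mat[OF assms(2) assms(5)] assms(3,4)] by simp
qed

lemma mat_adjoint_congruence:
  assumes "(W :: complex mat) \<in> carrier_mat n n" "H \<in> carrier_mat n n"
  shows "mat_adjoint (mat_adjoint W * H * W) = mat_adjoint W * mat_adjoint H * W"
proof -
  have "mat_adjoint (mat_adjoint W * H * W) = mat_adjoint W * mat_adjoint (mat_adjoint W * H)"
    by (rule mat_adjoint_mult) (use assms in auto)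
  also have "mat_adjoint (mat_adjoint W * H) = mat_adjoint H * W"
    by (subst mat_adjoint_mult) (use assms in auto)
  finally show ?thesis
    using assms by (simp add: assoc_mult_mat[of _ n n _ n _ n])
qed

definition unitary_mat :: "nat \<Rightarrow> complex mat \<Rightarrow> bool" where
  "unitary_mat n U \<longleftrightarrow> U \<in> carrier_mat n n \<and> mat_adjoint U * U = 1\<^sub>m n"

lemma unitary_mat_carrier: "unitary_mat n U \<Longrightarrow> U \<in> carrier_mat n n"
  unfolding unitary_mat_def by simp

lemma unitary_mat_one [simp]: "unitary_mat n (1\<^sub>m n)"
  unfolding unitary_mat_def by simp

lemma unitary_mat_right_inverse: "unitary_mat n U \<Longrightarrow> U * mat_adjoint U = 1\<^sub>m n"
  unfolding unitary_mat_def by (metis mat_adjoint_carrier mat_mult_left_right_inverse)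

lemma unitary_mat_mult:
  assumes U: "unitary_mat n U" and U': "unitary_mat n U'"
  shows "unitary_mat n (U * U')"
proof -
  have Uc: "U \<in> carrier_mat n n" and U'c: "U' \<in> carrier_mat n n"
    using U U' by (simp_all add: unitary_mat_carrier)
  have "mat_adjoint (U * U') * (U * U') = mat_adjoint U' * (mat_adjoint U * U) * U'"
    unfolding mat_adjoint_mult[OF Uc U'c] by (rule assoc_mult_mat4) (use Uc U'c in auto)
  also have "\<dots> = 1\<^sub>m n"
    using U U' U'c unfolding unitary_mat_def by simp
  finally show ?thesis
    using Uc U'c unfolding unitary_mat_def by simp
qed

lemma mult_four_block_diag_mat:
  assumes "A \<in> carrier_mat n n" "B \<in> carrier_mat m m" "C \<in> carrier_mat n n" "D \<in> carrier_mat m m"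
  shows "four_block_mat A (0\<^sub>m n m) (0\<^sub>m m n) B * four_block_mat C (0\<^sub>m n m) (0\<^sub>m m n) D =
    four_block_mat (A * C) (0\<^sub>m n m) (0\<^sub>m m n) (B * D)"
  using assms by (subst mult_four_block_mat[of _ n n _ m _ m]) auto

lemma mat_adjoint_four_block_diag:
  assumes "(A :: complex mat) \<in> carrier_mat n n" "B \<in> carrier_mat m m"
  shows "mat_adjoint (four_block_mat A (0\<^sub>m n m) (0\<^sub>m m n) B) =
    four_block_mat (mat_adjoint A) (0\<^sub>m n m) (0\<^sub>m m n) (mat_adjoint B)"
proof -
  have "dim_row A = n" "dim_col A = n" "dim_row B = m" "dim_col B = m" using assms by auto
  then show ?thesis by (intro eq_matI) auto
qed

lemma unitary_mat_four_block_diag: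
  assumes "unitary_mat n U" "unitary_mat m U'"
  shows "unitary_mat (n + m) (four_block_mat U (0\<^sub>m n m) (0\<^sub>m m n) U')"
  using assms unfolding unitary_mat_def
  by (simp add: mat_adjoint_four_block_diag mult_four_block_diag_mat)

lemma unitary_mat_normalised_cols:
  assumes ws: "set ws \<subseteq> carrier_vec n" "corthogonal ws" "length ws = n"
  defines "nr j \<equiv> sqrt (\<Sum>k<n. (cmod (ws ! j $ k))\<^sup>2)"
  shows "unitary_mat n (mat n n (\<lambda>(i,j). ws ! j $ i / complex_of_real (nr j)))"
proof -
  define W where "W = mat n n (\<lambda>(i,j). ws ! j $ i / complex_of_real (nr j))"
  have ws_carrier: "j < n \<Longrightarrow> ws ! j \<in> carrier_vec n" for j using ws by auto
  have sprod: "ws ! i \<bullet>c ws ! j = (\<Sum>k<n. ws ! i $ k * cnj (ws ! j $ k))" if "i < n" "j < n" for i j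
    using ws_carrier[OF that(1)] ws_carrier[OF that(2)] by (simp add: scalar_prod_def atLeast0LessThan)
  have self: "ws ! j \<bullet>c ws ! j = complex_of_real ((nr j)\<^sup>2)" if "j < n" for j
  proof -
    have "ws ! j \<bullet>c ws ! j = (\<Sum>k<n. complex_of_real ((cmod (ws ! j $ k))\<^sup>2))"
      unfolding sprod[OF that that] by (rule sum.cong) (auto simp: complex_norm_square[symmetric])
    then show ?thesis
      unfolding nr_def by (simp add: sum_nonneg)
  qed
  have nr0: "nr j \<noteq> 0" if "j < n" for j
    using self[OF that] corthogonalD[OF ws(2), of j j] that ws(3) by auto
  have "mat_adjoint W * W = 1\<^sub>m n"
  proof (rule eq_matI)
    fix i j assume "i < dim_row (1\<^sub>m n :: complex mat)" "j < dim_col (1\<^sub>m n :: complex mat)"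
    then have i: "i < n" and j: "j < n" by auto
    have "(mat_adjoint W * W) $$ (i,j) =
        (\<Sum>k<n. cnj (ws ! i $ k / complex_of_real (nr i)) * (ws ! j $ k / complex_of_real (nr j)))"
      using i j by (simp add: scalar_prod_def atLeast0LessThan W_def)
    also have "\<dots> = (ws ! j \<bullet>c ws ! i) / (complex_of_real (nr i) * complex_of_real (nr j))"
      using sprod[OF j i] by (simp add: sum_divide_distrib mult.commute)
    also have "\<dots> = 1\<^sub>m n $$ (i,j)"
      using self[OF i] nr0[OF i] corthogonalD[OF ws(2), of j i] i j ws(3)
      by (cases "i = j") (auto simp: power2_eq_square)
    finally show "(mat_adjoint W * W) $$ (i,j) = 1\<^sub>m n $$ (i,j)" .
  qed (auto simp: W_def)
  then show ?thesis unfolding unitary_mat_def W_def by simp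
qed

lemma unitary_mat_with_first_col:
  assumes v: "(v :: complex vec) \<in> carrier_vec n" and v0: "v \<noteq> 0\<^sub>v n"
  shows "\<exists>W c. unitary_mat n W \<and> col W 0 = c \<cdot>\<^sub>v v"
proof -
  interpret cof_vec_space n "TYPE(complex)" .
  define b where "b = basis_completion v"
  define ws where "ws = gram_schmidt n b"
  from basis_completion[OF v v0, folded b_def]
  have dist_b: "distinct b" and indep: "\<not> lin_dep (set b)" and b: "set b \<subseteq> carrier_vec n"
    and hdb: "hd b = v" and len_b: "length b = n" by auto
  have n: "n \<noteq> 0" using v v0 by (cases n) auto
  from hdb len_b n obtain vs where bv: "b = v # vs" by (cases b) auto
  from gram_schmidt_result[OF b dist_b indep refl, folded ws_def]
  have ws: "set ws \<subseteq> carrier_vec n" "corthogonal ws" "length ws = n"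
    by (auto simp: len_b)
  from gram_schmidt_hd[OF v, of vs, folded bv] have "hd ws = v" unfolding ws_def .
  then have ws0: "ws ! 0 = v" using ws n by (cases ws) auto
  define nr where "nr j = sqrt (\<Sum>k<n. (cmod (ws ! j $ k))\<^sup>2)" for j
  define W where "W = mat n n (\<lambda>(i,j). ws ! j $ i / complex_of_real (nr j))"
  have "unitary_mat n W"
    unfolding W_def nr_def by (rule unitary_mat_normalised_cols[OF ws])
  moreover have "col W 0 = (1 / complex_of_real (nr 0)) \<cdot>\<^sub>v v"
    by (rule eq_vecI) (use n v ws0 in \<open>auto simp: W_def\<close>)
  ultimately show ?thesis by blast
qed

lemma eigenvector_exists:
  assumes H: "(H :: complex mat) \<in> carrier_mat (Suc m) (Suc m)"
  shows "\<exists>e v. eigenvector H v e"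
proof -
  obtain es where "char_poly H = (\<Prod>a\<leftarrow>es. [:- a, 1:])" "length es = Suc m"
    using char_poly_factorized[OF H] by blast
  then obtain e es' where "char_poly H = [:- e, 1:] * (\<Prod>a\<leftarrow>es'. [:- a, 1:])"
    by (cases es) auto
  then have "eigenvalue H e"
    using eigenvalue_root_char_poly[OF H] by simp
  then show ?thesis unfolding eigenvalue_def by blast
qed

lemma unitary_congruence_first_col:
  assumes W: "unitary_mat n W" and H: "H \<in> carrier_mat n n"
    and ev: "H *\<^sub>v col W 0 = e \<cdot>\<^sub>v col W 0" and i: "i < n"
  shows "(mat_adjoint W * H * W) $$ (i, 0) = (if i = 0 then e else 0)"
proof -
  have Wc: "W \<in> carrier_mat n n" using W by (rule unitary_mat_carrier)
  have "col (mat_adjoint W * (H * W)) 0 = mat_adjoint W *\<^sub>v (e \<cdot>\<^sub>v col W 0)"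
    using col_mult2[OF mat_adjoint_carrier[OF Wc] mult_carrier_mat[OF H Wc]] col_mult2[OF H Wc] i ev
    by simp
  also have "\<dots> = e \<cdot>\<^sub>v col (mat_adjoint W * W) 0"
    using col_mult2[OF mat_adjoint_carrier[OF Wc] Wc] i
    by (simp add: mult_mat_vec[OF mat_adjoint_carrier[OF Wc] col_carrier_vec[OF _ Wc]])
  finally have "col (mat_adjoint W * H * W) 0 = e \<cdot>\<^sub>v col (1\<^sub>m n) 0"
    using W Wc H unfolding unitary_mat_def by (simp add: assoc_mult_mat[of _ n n _ n _ n])
  then have "col (mat_adjoint W * H * W) 0 $ i = (e \<cdot>\<^sub>v col (1\<^sub>m n) 0) $ i"
    by (rule arg_cong)
  then show ?thesis
    using Wc H i by simp
qed

lemma hermitian_first_col_block: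
  assumes H: "(H :: complex mat) \<in> carrier_mat (Suc m) (Suc m)" and herm: "mat_adjoint H = H"
    and col0: "\<And>i. i < Suc m \<Longrightarrow> H $$ (i, 0) = (if i = 0 then e else 0)"
  shows "\<exists>H'. H' \<in> carrier_mat m m \<and> mat_adjoint H' = H' \<and>
    H = four_block_mat (mat 1 1 (\<lambda>_. e)) (0\<^sub>m 1 m) (0\<^sub>m m 1) H'"
proof -
  have entry: "cnj (H $$ (j, i)) = H $$ (i, j)" if "i < Suc m" "j < Suc m" for i j
    using arg_cong[OF herm, of "\<lambda>M. M $$ (i, j)"] H that by simp
  have row0: "H $$ (0, j) = (if j = 0 then e else 0)" if "j < Suc m" for j
    using entry[of 0 j] col0[of j] col0[of 0] that by (cases "j = 0") auto
  define H' where "H' = mat m m (\<lambda>(i, j). H $$ (Suc i, Suc j))"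
  have "mat_adjoint H' = H'"
    by (rule eq_matI) (auto simp: H'_def entry)
  moreover have "H = four_block_mat (mat 1 1 (\<lambda>_. e)) (0\<^sub>m 1 m) (0\<^sub>m m 1) H'"
  proof (rule eq_matI)
    fix i j assume "i < dim_row (four_block_mat (mat 1 1 (\<lambda>_. e)) (0\<^sub>m 1 m) (0\<^sub>m m 1) H')"
      "j < dim_col (four_block_mat (mat 1 1 (\<lambda>_. e)) (0\<^sub>m 1 m) (0\<^sub>m m 1) H')"
    then have i: "i < Suc m" and j: "j < Suc m" by (auto simp: H'_def)
    show "H $$ (i, j) = four_block_mat (mat 1 1 (\<lambda>_. e)) (0\<^sub>m 1 m) (0\<^sub>m m 1) H' $$ (i, j)"
      using i j col0[OF i] row0[OF j] by (cases "i = 0"; cases "j = 0") (auto simp: H'_def)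
  qed (use H in \<open>auto simp: H'_def\<close>)
  moreover have "H' \<in> carrier_mat m m" unfolding H'_def by simp
  ultimately show ?thesis by blast
qed

lemma unitary_diagonalisation_block_step:
  assumes W: "unitary_mat (Suc m) W" and H: "H \<in> carrier_mat (Suc m) (Suc m)"
    and block: "mat_adjoint W * H * W = four_block_mat (mat 1 1 (\<lambda>_. e)) (0\<^sub>m 1 m) (0\<^sub>m m 1) H'"
    and H': "H' \<in> carrier_mat m m" and U': "unitary_mat m U'"
    and diag: "diagonal_mat (mat_adjoint U' * H' * U')"
  shows "\<exists>U. unitary_mat (Suc m) U \<and> diagonal_mat (mat_adjoint U * H * U)"
proof -
  define B where "B = four_block_mat (1\<^sub>m 1) (0\<^sub>m 1 m) (0\<^sub>m m 1) U'"
  have B: "unitary_mat (Suc m) B"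
    using unitary_mat_four_block_diag[OF unitary_mat_one[of 1] U'] unfolding B_def by simp
  have Wc: "W \<in> carrier_mat (Suc m) (Suc m)" and Bc: "B \<in> carrier_mat (Suc m) (Suc m)"
    and U'c: "U' \<in> carrier_mat m m"
    using W B U' by (simp_all add: unitary_mat_carrier)
  have "mat_adjoint (W * B) * H * (W * B) = mat_adjoint B * (mat_adjoint W * H * W) * B"
    unfolding mat_adjoint_mult[OF Wc Bc] by (rule assoc_mult_mat5) (use Wc Bc H in auto)
  also have "\<dots> = four_block_mat (mat 1 1 (\<lambda>_. e)) (0\<^sub>m 1 m) (0\<^sub>m m 1) (mat_adjoint U' * H' * U')"
    unfolding block B_def using U'c H' mult_carrier_mat[OF mat_adjoint_carrier[OF U'c] H']
    by (simp add: mat_adjoint_four_block_diag mult_four_block_diag_mat)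
  finally have "diagonal_mat (mat_adjoint (W * B) * H * (W * B))"
    using diag mult_carrier_mat[OF mult_carrier_mat[OF mat_adjoint_carrier[OF U'c] H'] U'c]
    unfolding diagonal_mat_def by auto
  then show ?thesis using unitary_mat_mult[OF W B] by blast
qed

lemma hermitian_unitary_diagonalisation:
  assumes "H \<in> carrier_mat n n" "mat_adjoint H = H"
  shows "\<exists>U. unitary_mat n U \<and> diagonal_mat (mat_adjoint U * H * U)"
  using assms
proof (induction n arbitrary: H)
  case 0
  then show ?case by (intro exI[of _ "1\<^sub>m 0"]) (auto simp: diagonal_mat_def)
next
  case (Suc m)
  note H = Suc.prems(1) and herm = Suc.prems(2)
  obtain e v where v: "eigenvector H v e" using eigenvector_exists[OF H] by blast
  then have v_carr: "v \<in> carrier_vec (Suc m)" and "v \<noteq> 0\<^sub>v (Suc m)"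
    using H unfolding eigenvector_def by auto
  then obtain W c where W: "unitary_mat (Suc m) W" and c: "col W 0 = c \<cdot>\<^sub>v v"
    using unitary_mat_with_first_col by blast
  have Wc: "W \<in> carrier_mat (Suc m) (Suc m)" using W by (rule unitary_mat_carrier)
  have "H *\<^sub>v col W 0 = e \<cdot>\<^sub>v col W 0"
    using v H v_carr unfolding c eigenvector_def
    by (simp add: mult_mat_vec smult_smult_assoc mult.commute)
  then have col0: "\<And>i. i < Suc m \<Longrightarrow> (mat_adjoint W * H * W) $$ (i, 0) = (if i = 0 then e else 0)"
    using unitary_congruence_first_col[OF W H] by blast
  have "mat_adjoint (mat_adjoint W * H * W) = mat_adjoint W * H * W"
    using mat_adjoint_congruence[OF Wc H] herm by simp
  then obtain H' where H': "H' \<in> carrier_mat m m" "mat_adjoint H' = H'"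
    and block: "mat_adjoint W * H * W = four_block_mat (mat 1 1 (\<lambda>_. e)) (0\<^sub>m 1 m) (0\<^sub>m m 1) H'"
    using hermitian_first_col_block[OF _ _ col0] mult_carrier_mat[OF mult_carrier_mat[OF
        mat_adjoint_carrier[OF Wc] H] Wc] by blast
  obtain U' where "unitary_mat m U'" "diagonal_mat (mat_adjoint U' * H' * U')"
    using Suc.IH[OF H'] by blast
  then show ?case
    using unitary_diagonalisation_block_step[OF W H block H'(1)] by blast
qed

section \<open>Schmidt coefficients\<close>

definition is_schmidt_list :: "nat \<Rightarrow> complex vec \<Rightarrow> real list \<Rightarrow> bool" where
  "is_schmidt_list d \<psi> ls \<longleftrightarrow> length ls = d \<and> sorted_wrt (\<ge>) ls \<and> (\<forall>s\<in>set ls. s \<ge> 0) \<and>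
      char_poly (mat_adjoint (coeff_mat d \<psi>) * coeff_mat d \<psi>)
        = (\<Prod>s\<leftarrow>ls. [:- complex_of_real (s\<^sup>2), 1:])"

lemma proots_linear_factors: "proots (\<Prod>x\<leftarrow>xs. [:- x, 1:]) = mset (xs :: 'a :: idom list)"
proof (induction xs)
  case (Cons x xs)
  have "proots ([:- x, 1:] * (\<Prod>x\<leftarrow>xs. [:- x, 1:])) = proots [:- x, 1:] + proots (\<Prod>x\<leftarrow>xs. [:- x, 1:])"
    by (rule proots_mult) (auto simp: prod_list_zero_iff)
  then show ?case
    using Cons.IH proots_linear_factor[of "- x"] by simp
qed simp

lemma mset_eq_sum_list_eq:
  "mset xs = mset ys \<Longrightarrow> sum_list xs = sum_list (ys :: 'a :: comm_monoid_add list)"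
  by (metis sum_mset_sum_list)

lemma is_schmidt_list_unique:
  assumes "is_schmidt_list d \<psi> ls" "is_schmidt_list d \<psi> ls'"
  shows "ls = ls'"
proof -
  define sq where "sq s = complex_of_real (s\<^sup>2)" for s :: real
  have factors: "(\<Prod>s\<leftarrow>l. [:- complex_of_real (s\<^sup>2), 1:]) = (\<Prod>x\<leftarrow>map sq l. [:- x, 1:])" for l
    by (simp add: sq_def o_def)
  have "proots (char_poly (mat_adjoint (coeff_mat d \<psi>) * coeff_mat d \<psi>)) = mset (map sq l)"
    if "is_schmidt_list d \<psi> l" for l
  proof -
    have "char_poly (mat_adjoint (coeff_mat d \<psi>) * coeff_mat d \<psi>) = (\<Prod>x\<leftarrow>map sq l. [:- x, 1:])"
      using that unfolding is_schmidt_list_def factors by blast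
    then show ?thesis by (simp only: proots_linear_factors)
  qed
  then have "image_mset sq (mset ls) = image_mset sq (mset ls')"
    using assms by (metis mset_map)
  then have "image_mset (\<lambda>c. sqrt (Re c)) (image_mset sq (mset ls)) =
      image_mset (\<lambda>c. sqrt (Re c)) (image_mset sq (mset ls'))"
    by simp
  moreover have "image_mset (\<lambda>c. sqrt (Re c)) (image_mset sq (mset l)) = mset l"
    if "is_schmidt_list d \<psi> l" for l
  proof -
    have "image_mset (\<lambda>c. sqrt (Re c)) (image_mset sq (mset l)) = image_mset (\<lambda>x. x) (mset l)"
      unfolding image_mset.compositionality
      by (rule image_mset_cong) (use that in \<open>auto simp: is_schmidt_list_def sq_def\<close>)
    then show ?thesis by simp
  qed
  ultimately have mset_eq: "mset (rev ls') = mset (rev ls)" using assms by simp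
  have sorted: "sorted (rev l)" if "is_schmidt_list d \<psi> l" for l
    using that unfolding is_schmidt_list_def by (simp add: sorted_wrt_rev)
  have "sort (rev ls) = rev ls'"
    using mset_eq sorted[OF assms(2)] by (rule properties_for_sort)
  moreover have "sort (rev ls) = rev ls"
    using sorted[OF assms(1)] by (rule sorted_sort_id)
  ultimately show ?thesis by simp
qed

lemma schmidt_list_eqI: "is_schmidt_list d \<psi> ls \<Longrightarrow> schmidt_list d \<psi> = ls"
  unfolding schmidt_list_def is_schmidt_list_def[symmetric]
  by (rule the_equality) (auto intro: is_schmidt_list_unique)

lemma coeff_mat_carrier [simp]: "coeff_mat d \<psi> \<in> carrier_mat d d"
  unfolding coeff_mat_def by simp

lemma coeff_mat_index [simp]: "i < d \<Longrightarrow> j < d \<Longrightarrow> coeff_mat d \<psi> $$ (i,j) = \<psi> $ (i*d+j)"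
  unfolding coeff_mat_def by simp

lemma pair_index_less:
  assumes "i < d" "j < (d :: nat)"
  shows "i * d + j < d * d"
proof -
  have "i * d + j < Suc i * d" using assms by simp
  also have "\<dots> \<le> d * d" using assms(1) by (intro mult_le_mono1) simp
  finally show ?thesis .
qed

lemma sum_pair_index: "(\<Sum>a<m * (d :: nat). f a) = (\<Sum>i<m. \<Sum>j<d. f (i * d + j))"
proof -
  have "(\<Sum>a<m*d. f a) = (\<Sum>i<m. sum f {i*d..<i*d+d})"
    by (rule sum.nat_group[symmetric])
  also have "\<dots> = (\<Sum>i<m. \<Sum>j<d. f (i*d+j))"
  proof (rule sum.cong[OF refl])
    fix i
    have "sum f {0 + i*d..<d + i*d} = (\<Sum>j\<in>{0..<d}. f (j + i*d))"
      by (rule sum.shift_bounds_nat_ivl)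
    then show "sum f {i*d..<i*d+d} = (\<Sum>j<d. f (i*d+j))"
      by (simp add: atLeast0LessThan add.commute)
  qed
  finally show ?thesis .
qed

lemma diag_upper_triangular: "D \<in> carrier_mat n n \<Longrightarrow> diagonal_mat D \<Longrightarrow> upper_triangular D"
  unfolding diagonal_mat_def upper_triangular_def by auto

definition diag_state :: "nat \<Rightarrow> (nat \<Rightarrow> real) \<Rightarrow> complex vec" where
  "diag_state d c = vec (d*d) (\<lambda>a. if a div d = a mod d then complex_of_real (c (a mod d)) else 0)"

lemma diag_state_index:
  "i < d \<Longrightarrow> j < d \<Longrightarrow> diag_state d c $ (i*d+j) = (if i = j then complex_of_real (c i) else 0)"
  unfolding diag_state_def using pair_index_less by auto

lemma diag_state_sum_sq: "(\<Sum>a<d*d. (cmod (diag_state d c $ a))\<^sup>2) = (\<Sum>i<d. (c i)\<^sup>2)"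
proof -
  have "(\<Sum>a<d*d. (cmod (diag_state d c $ a))\<^sup>2) = (\<Sum>i<d. \<Sum>j<d. if j = i then (c i)\<^sup>2 else 0)"
    unfolding sum_pair_index[of _ d d] by (intro sum.cong) (auto simp: diag_state_index)
  then show ?thesis by simp
qed

lemma diag_state_trace: "(\<Sum>i<d. diag_state d c $ (i*d+i)) = complex_of_real (\<Sum>i<d. c i)"
  by (simp add: diag_state_index)

lemma schmidt_list_diag_state:
  assumes c0: "\<And>i. i < d \<Longrightarrow> c i \<ge> 0" and c_mono: "\<And>i j. i \<le> j \<Longrightarrow> j < d \<Longrightarrow> c j \<le> c i"
  shows "schmidt_list d (diag_state d c) = map c [0..<d]"
proof (rule schmidt_list_eqI)
  define A where "A = coeff_mat d (diag_state d c)"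
  have A: "A \<in> carrier_mat d d" unfolding A_def by simp
  have A_index: "A $$ (i,j) = (if i = j then complex_of_real (c i) else 0)" if "i < d" "j < d" for i j
    using that unfolding A_def by (simp add: diag_state_index)
  define G where "G = mat_adjoint A * A"
  have G: "G \<in> carrier_mat d d" unfolding G_def using mult_carrier_mat[OF mat_adjoint_carrier[OF A] A] .
  have G_index: "G $$ (i,j) = (if i = j then complex_of_real ((c i)\<^sup>2) else 0)"
    if ij: "i < d" "j < d" for i j
  proof -
    have "G $$ (i,j) = (\<Sum>l<d. cnj (A $$ (l,i)) * A $$ (l,j))"
      unfolding G_def using A ij by (simp add: scalar_prod_def atLeast0LessThan)
    also have "\<dots> = (\<Sum>l<d. if l = i then (if i = j then complex_of_real ((c i)\<^sup>2) else 0) else 0)"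
      by (rule sum.cong) (use ij in \<open>auto simp: A_index power2_eq_square\<close>)
    finally show ?thesis using ij by simp
  qed
  have "diagonal_mat G" unfolding diagonal_mat_def using G G_index by auto
  then have "char_poly G = (\<Prod>a\<leftarrow>diag_mat G. [:- a, 1:])"
    by (rule char_poly_upper_triangular[OF G diag_upper_triangular[OF G]])
  also have "diag_mat G = map (\<lambda>j. complex_of_real ((c j)\<^sup>2)) [0..<d]"
    unfolding diag_mat_def using G G_index by auto
  finally have "char_poly G = (\<Prod>s\<leftarrow>map c [0..<d]. [:- complex_of_real (s\<^sup>2), 1:])"
    by (simp add: o_def del: of_real_power)
  then show "is_schmidt_list d (diag_state d c) (map c [0..<d])"
    unfolding is_schmidt_list_def G_def A_def
    using c0 c_mono by (auto simp: sorted_wrt_iff_nth_less)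
qed

definition col_norm_sq :: "complex mat \<Rightarrow> nat \<Rightarrow> real" where
  "col_norm_sq B j = (\<Sum>i<dim_row B. (cmod (B $$ (i,j)))\<^sup>2)"

lemma col_norm_sq_nonneg: "col_norm_sq B j \<ge> 0"
  unfolding col_norm_sq_def by (simp add: sum_nonneg)

lemma mat_adjoint_mult_self_diag:
  assumes "(X :: complex mat) \<in> carrier_mat n m" "j < m"
  shows "(mat_adjoint X * X) $$ (j,j) = complex_of_real (col_norm_sq X j)"
proof -
  have "(mat_adjoint X * X) $$ (j,j) = (\<Sum>i<n. cnj (X $$ (i,j)) * X $$ (i,j))"
    using assms by (simp add: scalar_prod_def atLeast0LessThan)
  also have "\<dots> = (\<Sum>i<n. complex_of_real ((cmod (X $$ (i,j)))\<^sup>2))"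
    by (rule sum.cong) (auto simp: complex_norm_square[symmetric] mult.commute)
  finally show ?thesis using assms unfolding col_norm_sq_def by simp
qed

lemma mult_mat_adjoint_self_diag:
  assumes "(X :: complex mat) \<in> carrier_mat n m" "i < n"
  shows "(X * mat_adjoint X) $$ (i,i) = complex_of_real (\<Sum>j<m. (cmod (X $$ (i,j)))\<^sup>2)"
proof -
  have "(X * mat_adjoint X) $$ (i,i) = (\<Sum>j<m. X $$ (i,j) * cnj (X $$ (i,j)))"
    using assms by (simp add: scalar_prod_def atLeast0LessThan)
  also have "\<dots> = (\<Sum>j<m. complex_of_real ((cmod (X $$ (i,j)))\<^sup>2))"
    by (rule sum.cong) (auto simp: complex_norm_square[symmetric] mult.commute)
  finally show ?thesis by simp
qed

lemma unitary_orthogonalises_columns: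
  assumes A: "(A :: complex mat) \<in> carrier_mat n d"
  shows "\<exists>U. unitary_mat d U \<and> diagonal_mat (mat_adjoint (A * U) * (A * U))"
proof -
  have G: "mat_adjoint A * A \<in> carrier_mat d d" using mult_carrier_mat[OF mat_adjoint_carrier[OF A] A] .
  have "mat_adjoint (mat_adjoint A * A) = mat_adjoint A * A"
    using mat_adjoint_mult[OF mat_adjoint_carrier[OF A] A] by simp
  then obtain U where U: "unitary_mat d U" and "diagonal_mat (mat_adjoint U * (mat_adjoint A * A) * U)"
    using hermitian_unitary_diagonalisation[OF G] by blast
  moreover have "mat_adjoint (A * U) * (A * U) = mat_adjoint U * (mat_adjoint A * A) * U"
    using unitary_mat_carrier[OF U] A
    by (simp add: mat_adjoint_mult assoc_mult_mat4[OF mat_adjoint_carrier[OF unitary_mat_carrier[OF U]]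
          mat_adjoint_carrier[OF A] A unitary_mat_carrier[OF U]])
  ultimately show ?thesis by auto
qed

lemma char_poly_gram_col_norms:
  assumes A: "(A :: complex mat) \<in> carrier_mat n d" and U: "unitary_mat d U"
    and diag: "diagonal_mat (mat_adjoint (A * U) * (A * U))"
  shows "char_poly (mat_adjoint A * A) = (\<Prod>j\<leftarrow>[0..<d]. [:- complex_of_real (col_norm_sq (A * U) j), 1:])"
proof -
  define B where "B = A * U"
  define D where "D = mat_adjoint B * B"
  define G where "G = mat_adjoint A * A"
  have Uc: "U \<in> carrier_mat d d" using U by (rule unitary_mat_carrier)
  have Bc: "B \<in> carrier_mat n d" and Gc: "G \<in> carrier_mat d d"
    using A Uc mult_carrier_mat[OF mat_adjoint_carrier[OF A] A] unfolding B_def G_def by auto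
  have Dc: "D \<in> carrier_mat d d"
    using mult_carrier_mat[OF mat_adjoint_carrier[OF Bc] Bc] unfolding D_def .
  have "D = mat_adjoint U * G * U"
    using assoc_mult_mat4[OF mat_adjoint_carrier[OF Uc] mat_adjoint_carrier[OF A] A Uc]
    unfolding D_def B_def G_def mat_adjoint_mult[OF A Uc] .
  then have "U * D * mat_adjoint U = (U * mat_adjoint U) * G * (U * mat_adjoint U)"
    using assoc_mult_mat5[OF Uc _ Uc _ Gc] Uc by simp
  then have "G = U * D * mat_adjoint U"
    using unitary_mat_right_inverse[OF U] Gc by simp
  then have "similar_mat G D"
    using U Uc Dc Gc unitary_mat_right_inverse[OF U] unfolding unitary_mat_def
    by (intro similar_matI[where n = d]) auto
  then have "char_poly G = char_poly D" by (rule char_poly_similar)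
  also have "\<dots> = (\<Prod>a\<leftarrow>diag_mat D. [:- a, 1:])"
    using diag by (intro char_poly_upper_triangular[OF Dc] diag_upper_triangular[OF Dc])
      (simp add: D_def B_def)
  also have "diag_mat D = map (\<lambda>j. complex_of_real (col_norm_sq B j)) [0..<d]"
    unfolding diag_mat_def D_def using mat_adjoint_mult_self_diag[OF Bc] Bc by auto
  finally show ?thesis
    unfolding G_def B_def by (simp add: o_def)
qed

lemma schmidt_list_col_norms:
  assumes U: "unitary_mat d U"
    and diag: "diagonal_mat (mat_adjoint (coeff_mat d \<psi> * U) * (coeff_mat d \<psi> * U))"
  shows "schmidt_list d \<psi> = rev (sort (map (\<lambda>j. sqrt (col_norm_sq (coeff_mat d \<psi> * U) j)) [0..<d]))"
proof (rule schmidt_list_eqI)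
  define sl where "sl = map (\<lambda>j. sqrt (col_norm_sq (coeff_mat d \<psi> * U) j)) [0..<d]"
  have "(\<Prod>s\<leftarrow>rev (sort sl). [:- complex_of_real (s\<^sup>2), 1:]) = (\<Prod>s\<leftarrow>sl. [:- complex_of_real (s\<^sup>2), 1:])"
    by (simp only: prod_mset_prod_list[symmetric] mset_map mset_rev mset_sort)
  also have "\<dots> = char_poly (mat_adjoint (coeff_mat d \<psi>) * coeff_mat d \<psi>)"
    unfolding char_poly_gram_col_norms[OF coeff_mat_carrier U diag] sl_def
    by (simp add: o_def col_norm_sq_nonneg del: of_real_power)
  finally show "is_schmidt_list d \<psi> (rev (sort sl))"
    unfolding is_schmidt_list_def
    by (auto simp: sl_def sorted_wrt_rev col_norm_sq_nonneg)
qed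

lemma sum_col_norm_sq_mult_unitary:
  assumes A: "(A :: complex mat) \<in> carrier_mat d d" and U: "unitary_mat d U"
  shows "(\<Sum>j<d. col_norm_sq (A * U) j) = (\<Sum>i<d. \<Sum>j<d. (cmod (A $$ (i,j)))\<^sup>2)"
proof -
  have Uc: "U \<in> carrier_mat d d" using U by (rule unitary_mat_carrier)
  have B: "A * U \<in> carrier_mat d d" using A Uc by simp
  have "(A * U) * mat_adjoint (A * U) = A * (U * mat_adjoint U) * mat_adjoint A"
    unfolding mat_adjoint_mult[OF A Uc]
    by (rule assoc_mult_mat4[OF A Uc mat_adjoint_carrier[OF Uc] mat_adjoint_carrier[OF A]])
  then have BB: "(A * U) * mat_adjoint (A * U) = A * mat_adjoint A"
    using A unitary_mat_right_inverse[OF U] by simp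
  have "(\<Sum>j<d. col_norm_sq (A * U) j) = (\<Sum>j<d. \<Sum>i<d. (cmod ((A * U) $$ (i,j)))\<^sup>2)"
    unfolding col_norm_sq_def using A by simp
  also have "\<dots> = (\<Sum>i<d. \<Sum>j<d. (cmod ((A * U) $$ (i,j)))\<^sup>2)"
    by (rule sum.swap)
  also have "\<dots> = (\<Sum>i<d. \<Sum>j<d. (cmod (A $$ (i,j)))\<^sup>2)"
  proof (rule sum.cong[OF refl])
    fix i assume "i \<in> {..<d}"
    then show "(\<Sum>j<d. (cmod ((A * U) $$ (i,j)))\<^sup>2) = (\<Sum>j<d. (cmod (A $$ (i,j)))\<^sup>2)"
      using mult_mat_adjoint_self_diag[OF B, of i] mult_mat_adjoint_self_diag[OF A, of i] BB
      by (simp only: lessThan_iff of_real_eq_iff)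
  qed
  finally show ?thesis .
qed

lemma trace_le_sum_col_norms:
  assumes A: "(A :: complex mat) \<in> carrier_mat d d" and U: "unitary_mat d U"
  shows "cmod (\<Sum>i<d. A $$ (i,i)) \<le> (\<Sum>j<d. sqrt (col_norm_sq (A * U) j))"
proof -
  have Uc: "U \<in> carrier_mat d d" using U by (rule unitary_mat_carrier)
  define B where "B = A * U"
  have Bc: "B \<in> carrier_mat d d" unfolding B_def using A Uc by simp
  have "A = B * mat_adjoint U"
    unfolding B_def using A Uc unitary_mat_right_inverse[OF U]
    by (simp add: assoc_mult_mat[of _ d d _ d _ d])
  then have "(\<Sum>i<d. A $$ (i,i)) = (\<Sum>i<d. \<Sum>j<d. B $$ (i,j) * cnj (U $$ (i,j)))"
    using Bc Uc by (simp add: scalar_prod_def atLeast0LessThan)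
  also have "\<dots> = (\<Sum>j<d. \<Sum>i<d. B $$ (i,j) * cnj (U $$ (i,j)))"
    by (rule sum.swap)
  finally have trace: "(\<Sum>i<d. A $$ (i,i)) = (\<Sum>j<d. \<Sum>i<d. B $$ (i,j) * cnj (U $$ (i,j)))" .
  have unit_col: "(\<Sum>i<d. (cmod (U $$ (i,j)))\<^sup>2) = 1" if "j < d" for j
  proof -
    have "complex_of_real (col_norm_sq U j) = 1"
      using mat_adjoint_mult_self_diag[OF Uc that] U that unfolding unitary_mat_def by simp
    then have "col_norm_sq U j = 1" by (simp only: of_real_eq_1_iff)
    then show ?thesis using Uc unfolding col_norm_sq_def by simp
  qed
  have "cmod (\<Sum>i<d. A $$ (i,i)) \<le> (\<Sum>j<d. cmod (\<Sum>i<d. B $$ (i,j) * cnj (U $$ (i,j))))"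
    unfolding trace by (rule norm_sum)
  also have "\<dots> \<le> (\<Sum>j<d. sqrt (col_norm_sq B j))"
  proof (rule sum_mono)
    fix j assume "j \<in> {..<d}"
    then have j: "j < d" by simp
    have "cmod (\<Sum>i<d. B $$ (i,j) * cnj (U $$ (i,j))) \<le>
        (\<Sum>i<d. \<bar>cmod (B $$ (i,j))\<bar> * \<bar>cmod (U $$ (i,j))\<bar>)"
      by (rule order_trans[OF norm_sum]) (simp add: norm_mult)
    also have "\<dots> \<le> L2_set (\<lambda>i. cmod (B $$ (i,j))) {..<d} * L2_set (\<lambda>i. cmod (U $$ (i,j))) {..<d}"
      by (rule L2_set_mult_ineq)
    also have "\<dots> = sqrt (col_norm_sq B j)"
      unfolding L2_set_def col_norm_sq_def unit_col[OF j] using Bc by simp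
    finally show "cmod (\<Sum>i<d. B $$ (i,j) * cnj (U $$ (i,j))) \<le> sqrt (col_norm_sq B j)" .
  qed
  finally show ?thesis unfolding B_def .
qed

lemma obtain_schmidt_list_col_norms:
  obtains U where "unitary_mat d U"
    "schmidt_list d \<psi> = rev (sort (map (\<lambda>j. sqrt (col_norm_sq (coeff_mat d \<psi> * U) j)) [0..<d]))"
  using unitary_orthogonalises_columns[OF coeff_mat_carrier] schmidt_list_col_norms by blast

lemma schmidt_list_length: "length (schmidt_list d \<psi>) = d"
  by (rule obtain_schmidt_list_col_norms[of d \<psi>]) simp

lemma schmidt_list_nonneg: "s \<in> set (schmidt_list d \<psi>) \<Longrightarrow> s \<ge> 0"
  by (rule obtain_schmidt_list_col_norms[of d \<psi>]) (auto simp: col_norm_sq_nonneg)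

lemma sum_schmidt_sq: "sum_list (map (\<lambda>s. s\<^sup>2) (schmidt_list d \<psi>)) = (\<Sum>a<d*d. (cmod (\<psi> $ a))\<^sup>2)"
proof -
  obtain U where U: "unitary_mat d U"
    and ls: "schmidt_list d \<psi> = rev (sort (map (\<lambda>j. sqrt (col_norm_sq (coeff_mat d \<psi> * U) j)) [0..<d]))"
    by (rule obtain_schmidt_list_col_norms)
  have "sum_list (map (\<lambda>s. s\<^sup>2) (schmidt_list d \<psi>)) =
      sum_list (map (\<lambda>s. s\<^sup>2) (map (\<lambda>j. sqrt (col_norm_sq (coeff_mat d \<psi> * U) j)) [0..<d]))"
    unfolding ls by (rule mset_eq_sum_list_eq) (simp only: mset_map mset_rev mset_sort)
  also have "\<dots> = (\<Sum>j<d. col_norm_sq (coeff_mat d \<psi> * U) j)"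
    by (simp add: col_norm_sq_nonneg interv_sum_list_conv_sum_set_nat atLeast0LessThan)
  also have "\<dots> = (\<Sum>a<d*d. (cmod (\<psi> $ a))\<^sup>2)"
    unfolding sum_col_norm_sq_mult_unitary[OF coeff_mat_carrier U] sum_pair_index[of _ d d] by simp
  finally show ?thesis .
qed

lemma trace_le_sum_schmidt: "cmod (\<Sum>i<d. \<psi> $ (i*d+i)) \<le> sum_list (schmidt_list d \<psi>)"
proof -
  obtain U where U: "unitary_mat d U"
    and ls: "schmidt_list d \<psi> = rev (sort (map (\<lambda>j. sqrt (col_norm_sq (coeff_mat d \<psi> * U) j)) [0..<d]))"
    by (rule obtain_schmidt_list_col_norms)
  have "cmod (\<Sum>i<d. \<psi> $ (i*d+i)) = cmod (\<Sum>i<d. coeff_mat d \<psi> $$ (i,i))" by simp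
  also have "\<dots> \<le> (\<Sum>j<d. sqrt (col_norm_sq (coeff_mat d \<psi> * U) j))"
    by (rule trace_le_sum_col_norms[OF coeff_mat_carrier U])
  also have "\<dots> = sum_list (map (\<lambda>j. sqrt (col_norm_sq (coeff_mat d \<psi> * U) j)) [0..<d])"
    by (simp add: interv_sum_list_conv_sum_set_nat atLeast0LessThan)
  also have "\<dots> = sum_list (schmidt_list d \<psi>)"
    unfolding ls by (rule mset_eq_sum_list_eq) (simp only: mset_rev mset_sort)
  finally show ?thesis .
qed

section \<open>The maximal overlap with the maximally entangled state\<close>

(* (k+t)^2 (S^2 + k x^2) - k (k+t^2) (S+x)^2 factors as
   (t S - k x) ((2k + t - k t) S - k (k + 2t - 1) x), and both factors are nonnegative. *)
lemma quadratic_tail_bound: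
  fixes k t S x Q1 Q :: real
  assumes k: "k \<ge> 1" and t: "0 \<le> t" "t < 1" and S: "S \<ge> 0" and x: "0 \<le> x" "x \<le> t / k * S"
    and Q1: "S\<^sup>2 \<le> k * Q1" and Q: "Q1 + x\<^sup>2 \<le> Q"
  shows "(S + x)\<^sup>2 \<le> (k + t)\<^sup>2 / (k + t\<^sup>2) * Q"
proof -
  have kx: "k * x \<le> t * S" using x k by (simp add: field_simps)
  have "k * (k + 2*t - 1) * x \<le> t * (k + 2*t - 1) * S"
    using mult_left_mono[OF kx, of "k + 2*t - 1"] k t by (simp add: algebra_simps)
  also have "\<dots> \<le> (2*k + t - k*t) * S"
  proof (rule mult_right_mono[OF _ S])
    have "(2*k + t - k*t) - t * (k + 2*t - 1) = 2*(k+t)*(1-t)" by (simp add: algebra_simps)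
    moreover have "0 \<le> 2*(k+t)*(1-t)" using k t by simp
    ultimately show "t * (k + 2*t - 1) \<le> 2*k + t - k*t" by linarith
  qed
  finally have factor2: "0 \<le> (2*k + t - k*t) * S - k * (k + 2*t - 1) * x" by simp
  have "(k+t)\<^sup>2 * (S\<^sup>2 + k*x\<^sup>2) - k*(k+t\<^sup>2)*(S+x)\<^sup>2
      = (t*S - k*x) * ((2*k + t - k*t) * S - k * (k + 2*t - 1) * x)"
    by (simp add: algebra_simps power2_eq_square)
  also have "\<dots> \<ge> 0" using kx factor2 by simp
  finally have "k*(k+t\<^sup>2)*(S+x)\<^sup>2 \<le> (k+t)\<^sup>2 * (S\<^sup>2 + k*x\<^sup>2)" by linarith
  also have "\<dots> \<le> (k+t)\<^sup>2 * (k * Q)"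
  proof (rule mult_left_mono)
    have "S\<^sup>2 + k*x\<^sup>2 \<le> k * (Q1 + x\<^sup>2)" using Q1 by (simp add: distrib_left)
    also have "\<dots> \<le> k * Q" using Q k by (intro mult_left_mono) auto
    finally show "S\<^sup>2 + k*x\<^sup>2 \<le> k * Q" .
  qed simp
  finally have "k*((k+t\<^sup>2)*(S+x)\<^sup>2) \<le> k*((k+t)\<^sup>2 * Q)" by (simp add: algebra_simps)
  then have "(k+t\<^sup>2)*(S+x)\<^sup>2 \<le> (k+t)\<^sup>2 * Q" using k by simp
  moreover have "0 < k + t\<^sup>2" using k by (simp add: add_pos_nonneg)
  ultimately show ?thesis by (simp add: field_simps)
qed

lemma sq_sum_list_le:
  fixes s :: "real list" and k :: nat and t :: real
  assumes nonneg: "\<forall>x\<in>set s. x \<ge> 0" and k: "1 \<le> k" "k \<le> length s" and t: "0 \<le> t" "t < 1"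
    and tail: "\<And>i. k < i \<Longrightarrow> i < length s \<Longrightarrow> s ! i = 0"
    and small: "k < length s \<Longrightarrow> s ! k \<le> t / k * (\<Sum>i<k. s ! i)"
  shows "(sum_list s)\<^sup>2 \<le> (k + t)\<^sup>2 / (k + t\<^sup>2) * sum_list (map (\<lambda>x. x\<^sup>2) s)"
proof -
  define n where "n = length s"
  define S where "S = (\<Sum>i<k. s ! i)"
  define Q1 where "Q1 = (\<Sum>i<k. (s ! i)\<^sup>2)"
  define x where "x = (if k < n then s ! k else 0)"
  have nth_nonneg: "i < n \<Longrightarrow> s ! i \<ge> 0" for i using nonneg unfolding n_def by auto
  have split: "sum g {..<n} = sum g {..<k} + (if k < n then g k else 0) + sum g {Suc k..<n}"
    for g :: "nat \<Rightarrow> real"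
  proof -
    have "sum g {..<n} = sum g {..<k} + sum g {k..<n}"
      using k unfolding n_def by (metis atLeast0LessThan sum.atLeastLessThan_concat zero_le)
    then show ?thesis
      using k unfolding n_def by (cases "k < length s") (auto simp: sum.atLeast_Suc_lessThan)
  qed
  have "(\<Sum>i\<in>{Suc k..<n}. s ! i) = 0"
    using tail unfolding n_def by (intro sum.neutral) auto
  then have "sum_list s = S + x"
    using split[of "\<lambda>i. s ! i"] unfolding S_def x_def n_def
    by (simp add: sum_list_sum_nth atLeast0LessThan)
  moreover have "Q1 + x\<^sup>2 \<le> sum_list (map (\<lambda>x. x\<^sup>2) s)"
    using split[of "\<lambda>i. (s ! i)\<^sup>2"] sum_nonneg[of "{Suc k..<n}" "\<lambda>i. (s ! i)\<^sup>2"]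
    unfolding Q1_def x_def n_def by (auto simp: sum_list_sum_nth atLeast0LessThan)
  moreover have "S\<^sup>2 \<le> k * Q1"
    using sum_squared_le_sum_of_squares[of "\<lambda>i. s ! i" "{..<k}"] unfolding S_def Q1_def
    by (simp add: mult.commute)
  moreover have S_nonneg: "S \<ge> 0"
    using nth_nonneg k unfolding S_def n_def by (intro sum_nonneg) auto
  moreover have "0 \<le> x"
    using nth_nonneg unfolding x_def by auto
  moreover have "x \<le> t / k * S"
  proof (cases "k < n")
    case True
    then show ?thesis using small unfolding x_def S_def n_def by simp
  next
    case False
    have "0 \<le> t / k * S" using t S_nonneg by simp
    then show ?thesis using False unfolding x_def by simp
  qed
  ultimately show ?thesis
    using quadratic_tail_bound[of k t S x Q1] k t by simp
qed

lemma nat_floor_frac_bounds: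
  assumes "1 \<le> \<alpha>" "\<alpha> \<le> real d"
  defines "k \<equiv> nat \<lfloor>\<alpha>\<rfloor>"
  shows "1 \<le> k" "k \<le> d" "0 \<le> \<alpha> - k" "\<alpha> - k < 1" "real_of_int \<lfloor>\<alpha>\<rfloor> = real k"
    "\<alpha> - k = 0 \<Longrightarrow> nat \<lceil>\<alpha>\<rceil> = k"
    "\<alpha> - k > 0 \<Longrightarrow> nat \<lceil>\<alpha>\<rceil> = k + 1 \<and> k < d"
proof -
  have floor_ge_1: "\<lfloor>\<alpha>\<rfloor> \<ge> 1" using assms(1) by (metis le_floor_iff of_int_1)
  show k_real: "real_of_int \<lfloor>\<alpha>\<rfloor> = real k" using floor_ge_1 unfolding k_def by simp
  show "1 \<le> k" using nat_mono[OF floor_ge_1] unfolding k_def by simp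
  show "k \<le> d" using assms(2) unfolding k_def by (simp add: floor_le_iff nat_le_iff)
  show "0 \<le> \<alpha> - k" "\<alpha> - k < 1"
    using k_real of_int_floor_le[of \<alpha>] real_of_int_floor_add_one_gt[of \<alpha>] by linarith+
  show "nat \<lceil>\<alpha>\<rceil> = k" if "\<alpha> - k = 0"
  proof -
    have "\<alpha> = real_of_int \<lfloor>\<alpha>\<rfloor>" using that k_real by linarith
    then have "\<lceil>\<alpha>\<rceil> = \<lfloor>\<alpha>\<rfloor>" by (metis ceiling_of_int)
    then show ?thesis unfolding k_def by simp
  qed
  show "nat \<lceil>\<alpha>\<rceil> = k + 1 \<and> k < d" if "\<alpha> - k > 0"
  proof
    have "\<lceil>\<alpha>\<rceil> = \<lfloor>\<alpha>\<rfloor> + 1"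
      using that k_real real_of_int_floor_add_one_gt[of \<alpha>] by (intro ceiling_unique) auto
    then show "nat \<lceil>\<alpha>\<rceil> = k + 1" using floor_ge_1 unfolding k_def by (simp add: nat_add_distrib)
    show "k < d" using that k_real assms(2) by linarith
  qed
qed

lemma t_star_nat_floor:
  assumes "1 \<le> \<alpha>"
  shows "t_star \<alpha> = (real (nat \<lfloor>\<alpha>\<rfloor>) + (\<alpha> - real (nat \<lfloor>\<alpha>\<rfloor>))\<^sup>2) / \<alpha>\<^sup>2"
proof -
  have "real_of_int \<lfloor>\<alpha>\<rfloor> = real (nat \<lfloor>\<alpha>\<rfloor>)" using assms by (simp add: le_floor_iff)
  then show ?thesis unfolding t_star_def Let_def by simp
qed

lemma t_star_pos: "1 \<le> \<alpha> \<Longrightarrow> t_star \<alpha> > 0"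
  by (simp add: t_star_nat_floor add_pos_nonneg)

lemma omega_index:
  "a < d*d \<Longrightarrow> omega d $ a = (if a div d = a mod d then complex_of_real (1 / sqrt (real d)) else 0)"
  unfolding omega_def by simp

lemma omega_inner:
  "(\<Sum>b<d*d. cnj (omega d $ b) * \<psi> $ b) = complex_of_real (1 / sqrt (real d)) * (\<Sum>i<d. \<psi> $ (i*d+i))"
proof -
  have "(\<Sum>b<d*d. cnj (omega d $ b) * \<psi> $ b) = (\<Sum>i<d. \<Sum>j<d. cnj (omega d $ (i*d+j)) * \<psi> $ (i*d+j))"
    by (rule sum_pair_index)
  also have "\<dots> = (\<Sum>i<d. complex_of_real (1 / sqrt (real d)) * \<psi> $ (i*d+i))"
  proof (rule sum.cong[OF refl])
    fix i assume "i \<in> {..<d}"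
    then have i: "i < d" by simp
    have "(\<Sum>j<d. cnj (omega d $ (i*d+j)) * \<psi> $ (i*d+j)) =
        (\<Sum>j<d. if j = i then complex_of_real (1 / sqrt (real d)) * \<psi> $ (i*d+i) else 0)"
      by (rule sum.cong) (auto simp: omega_index pair_index_less[OF i])
    then show "(\<Sum>j<d. cnj (omega d $ (i*d+j)) * \<psi> $ (i*d+j)) =
        complex_of_real (1 / sqrt (real d)) * \<psi> $ (i*d+i)"
      using i by simp
  qed
  finally show ?thesis by (simp add: sum_distrib_left)
qed

lemma qform_P_omega:
  "qform d (P_omega d) \<psi> = complex_of_real ((cmod (\<Sum>i<d. \<psi> $ (i*d+i)))\<^sup>2 / real d)"
proof -
  define z where "z = (\<Sum>b<d*d. cnj (omega d $ b) * \<psi> $ b)"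
  have "qform d (P_omega d) \<psi> =
      (\<Sum>a<d*d. \<Sum>b<d*d. (cnj (\<psi> $ a) * omega d $ a) * (cnj (omega d $ b) * \<psi> $ b))"
    unfolding qform_def P_omega_def by (intro sum.cong) (auto simp: algebra_simps)
  also have "\<dots> = (\<Sum>a<d*d. cnj (\<psi> $ a) * omega d $ a) * z"
    unfolding z_def by (simp add: sum_product)
  also have "(\<Sum>a<d*d. cnj (\<psi> $ a) * omega d $ a) = cnj z"
    unfolding z_def by (simp add: omega_index mult.commute)
  finally have q: "qform d (P_omega d) \<psi> = complex_of_real ((cmod z)\<^sup>2)"
    by (simp add: complex_norm_square[symmetric] mult.commute)
  have "(cmod z)\<^sup>2 = (1 / sqrt (real d))\<^sup>2 * (cmod (\<Sum>i<d. \<psi> $ (i*d+i)))\<^sup>2"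
    unfolding z_def omega_inner by (simp add: norm_divide power_divide)
  also have "\<dots> = (cmod (\<Sum>i<d. \<psi> $ (i*d+i)))\<^sup>2 / real d"
    by (simp add: power_divide)
  finally show ?thesis using q by simp
qed

lemma admissible_sum_schmidt_sq_le:
  assumes adm: "admissible d \<alpha> \<psi>" and \<alpha>: "1 \<le> \<alpha>" "\<alpha> \<le> real d"
  shows "(sum_list (schmidt_list d \<psi>))\<^sup>2 \<le> 1 / t_star \<alpha>"
proof -
  define k where "k = nat \<lfloor>\<alpha>\<rfloor>"
  define t where "t = \<alpha> - real k"
  define ls where "ls = schmidt_list d \<psi>"
  note bounds = nat_floor_frac_bounds[OF \<alpha>, folded k_def t_def]
  from adm have unit: "unit_vector d \<psi>"
    and zero: "\<And>j. nat \<lceil>\<alpha>\<rceil> + 1 \<le> j \<Longrightarrow> j \<le> d \<Longrightarrow> schmidt d \<psi> j = 0"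
    and small: "t > 0 \<Longrightarrow> schmidt d \<psi> (k+1) \<le> t / real k * (\<Sum>j=1..k. schmidt d \<psi> j)"
    unfolding admissible_def Let_def k_def[symmetric] t_def[symmetric] by blast+
  have len: "length ls = d" and nonneg: "\<forall>x\<in>set ls. x \<ge> 0"
    unfolding ls_def by (simp_all add: schmidt_list_length schmidt_list_nonneg)
  have ls_index: "schmidt d \<psi> (Suc i) = ls ! i" for i unfolding schmidt_def ls_def by simp
  have tail: "ls ! i = 0" if "nat \<lceil>\<alpha>\<rceil> \<le> i" "i < d" for i
    using zero[of "Suc i"] that by (simp add: ls_index)
  have "(sum_list ls)\<^sup>2 \<le> (k + t)\<^sup>2 / (k + t\<^sup>2) * sum_list (map (\<lambda>x. x\<^sup>2) ls)"
  proof (rule sq_sum_list_le[OF nonneg])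
    show "k < i \<Longrightarrow> i < length ls \<Longrightarrow> ls ! i = 0" for i
      using bounds tail len by (cases "t = 0") auto
    show "ls ! k \<le> t / k * (\<Sum>i<k. ls ! i)" if "k < length ls"
    proof (cases "t = 0")
      case True
      then show ?thesis using bounds tail that len by (simp add: sum_nonneg)
    next
      case False
      then show ?thesis
        using small bounds by (simp add: ls_index sum.atLeast1_atMost_eq)
    qed
  qed (use bounds len in auto)
  also have "\<dots> = 1 / t_star \<alpha>"
    using sum_schmidt_sq[where d = d and \<psi> = \<psi>] unit \<alpha>
    unfolding t_star_nat_floor[OF \<alpha>(1)] unit_vector_def ls_def k_def t_def by simp
  finally show ?thesis unfolding ls_def .
qed

lemma admissible_qform_P_omega_le:
  assumes adm: "admissible d \<alpha> \<psi>" and \<alpha>: "1 \<le> \<alpha>" "\<alpha> \<le> real d"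
  shows "Re (qform d (P_omega d) \<psi>) \<le> 1 / (real d * t_star \<alpha>)"
proof -
  have "(cmod (\<Sum>i<d. \<psi> $ (i*d+i)))\<^sup>2 \<le> 1 / t_star \<alpha>"
    using trace_le_sum_schmidt[where d = d and \<psi> = \<psi>] admissible_sum_schmidt_sq_le[OF assms]
    by (meson norm_ge_zero order_trans power_mono)
  then have "(cmod (\<Sum>i<d. \<psi> $ (i*d+i)))\<^sup>2 / real d \<le> (1 / t_star \<alpha>) / real d"
    by (rule divide_right_mono) simp
  moreover have "(1 / t_star \<alpha>) / real d = 1 / (real d * t_star \<alpha>)" by simp
  ultimately show ?thesis
    unfolding qform_P_omega by (simp add: mult.commute)
qed

lemma sum_lessThan_step:
  fixes a b :: real
  assumes "k \<le> d"
  shows "(\<Sum>i<d. if i < k then a else if i = k then b else 0) = real k * a + (if k < d then b else 0)"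
proof -
  define f where "f i = (if i < k then a else if i = k then b else 0)" for i
  have "(\<Sum>i<d. f i) = (\<Sum>i<k. f i) + (\<Sum>i\<in>{k..<d}. f i)"
    using assms by (metis atLeast0LessThan sum.atLeastLessThan_concat zero_le)
  moreover have "(\<Sum>i<k. f i) = real k * a" by (simp add: f_def)
  moreover have "(\<Sum>i\<in>{k..<d}. f i) = (if k < d then b else 0)"
  proof (cases "k < d")
    case True
    then have "(\<Sum>i\<in>{k..<d}. f i) = f k + (\<Sum>i\<in>{Suc k..<d}. f i)"
      by (simp add: sum.atLeast_Suc_lessThan)
    moreover have "(\<Sum>i\<in>{Suc k..<d}. f i) = 0" by (intro sum.neutral) (auto simp: f_def)
    ultimately show ?thesis using True by (simp add: f_def)
  qed (use assms in simp)
  ultimately show ?thesis unfolding f_def by simp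
qed

definition extremal_coeffs :: "nat \<Rightarrow> real \<Rightarrow> nat \<Rightarrow> real" where
  "extremal_coeffs k t i = (if i < k then 1 else if i = k then t else 0) / sqrt (real k + t\<^sup>2)"

lemma extremal_coeffs_sums:
  assumes k: "1 \<le> k" "k \<le> d" and kt: "k < d \<or> t = 0"
  shows "(\<Sum>i<d. extremal_coeffs k t i) = (real k + t) / sqrt (real k + t\<^sup>2)"
    and "(\<Sum>i<d. (extremal_coeffs k t i)\<^sup>2) = 1"
proof -
  define N where "N = sqrt (real k + t\<^sup>2)"
  have pos: "real k + t\<^sup>2 > 0" using k by (simp add: add_pos_nonneg)
  have "(\<Sum>i<d. extremal_coeffs k t i) = (\<Sum>i<d. if i < k then 1 else if i = k then t else 0) / N"
    unfolding extremal_coeffs_def N_def by (simp add: sum_divide_distrib)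
  also have "\<dots> = (real k + t) / N"
    using sum_lessThan_step[OF k(2), of 1 t] kt by auto
  finally show "(\<Sum>i<d. extremal_coeffs k t i) = (real k + t) / sqrt (real k + t\<^sup>2)"
    unfolding N_def .
  have "(\<Sum>i<d. (extremal_coeffs k t i)\<^sup>2) = (\<Sum>i<d. if i < k then 1 else if i = k then t\<^sup>2 else 0) / N\<^sup>2"
    unfolding extremal_coeffs_def N_def sum_divide_distrib
    by (intro sum.cong) (auto simp: power_divide)
  also have "\<dots> = (real k + t\<^sup>2) / N\<^sup>2"
    using sum_lessThan_step[OF k(2), of 1 "t\<^sup>2"] kt by auto
  also have "\<dots> = 1" using pos unfolding N_def by simp
  finally show "(\<Sum>i<d. (extremal_coeffs k t i)\<^sup>2) = 1" .
qed

lemma extremal_coeffs_nonneg: "0 \<le> t \<Longrightarrow> 0 \<le> extremal_coeffs k t i"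
  unfolding extremal_coeffs_def by simp

lemma extremal_coeffs_antimono:
  assumes "0 \<le> t" "t \<le> 1" "i \<le> j"
  shows "extremal_coeffs k t j \<le> extremal_coeffs k t i"
  unfolding extremal_coeffs_def using assms by (intro divide_right_mono) auto

lemma admissible_qform_P_omega_attained:
  assumes \<alpha>: "1 \<le> \<alpha>" "\<alpha> \<le> real d"
  shows "\<exists>\<psi>\<in>V d \<alpha>. Re (qform d (P_omega d) \<psi>) = 1 / (real d * t_star \<alpha>)"
proof -
  define k where "k = nat \<lfloor>\<alpha>\<rfloor>"
  define t where "t = \<alpha> - real k"
  note bounds = nat_floor_frac_bounds[OF \<alpha>, folded k_def t_def]
  define N where "N = sqrt (real k + t\<^sup>2)"
  define \<psi> where "\<psi> = diag_state d (extremal_coeffs k t)"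
  have k_or_t: "k < d \<or> t = 0" using bounds by force
  note sums = extremal_coeffs_sums[OF bounds(1,2) k_or_t]
  have coeff: "extremal_coeffs k t i = (if i < k then 1 / N else if i = k then t / N else 0)" for i
    unfolding extremal_coeffs_def N_def by simp
  have schmidt_\<psi>: "schmidt d \<psi> j = extremal_coeffs k t (j - 1)" if "1 \<le> j" "j \<le> d" for j
    using that bounds extremal_coeffs_nonneg extremal_coeffs_antimono
    unfolding schmidt_def \<psi>_def by (subst schmidt_list_diag_state) auto
  have "unit_vector d \<psi>"
    unfolding unit_vector_def \<psi>_def diag_state_sum_sq sums(2) by (simp add: diag_state_def)
  moreover have "schmidt d \<psi> j = 0" if "nat \<lceil>\<alpha>\<rceil> + 1 \<le> j" "j \<le> d" for j
  proof -
    have "k < j - 1 \<or> (k = j - 1 \<and> t = 0)" using that bounds by (cases "t = 0") auto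
    then show ?thesis using that schmidt_\<psi>[of j] coeff[of "j - 1"] by auto
  qed
  moreover have "schmidt d \<psi> (k+1) \<le> t / real k * (\<Sum>j=1..k. schmidt d \<psi> j)" if "t > 0"
  proof -
    have "(\<Sum>j=1..k. schmidt d \<psi> j) = (\<Sum>i<k. 1 / N)"
      using bounds by (simp add: sum.atLeast1_atMost_eq schmidt_\<psi> coeff)
    moreover have "schmidt d \<psi> (k+1) = t / N"
      using that bounds schmidt_\<psi>[of "k+1"] coeff[of k] by simp
    ultimately show ?thesis using bounds by simp
  qed
  ultimately have "\<psi> \<in> V d \<alpha>"
    unfolding V_def admissible_def Let_def k_def[symmetric] t_def[symmetric] by blast
  have "real k + t = \<alpha>" unfolding t_def by simp
  then have "(cmod (\<Sum>i<d. \<psi> $ (i*d+i)))\<^sup>2 = \<alpha>\<^sup>2 / (real k + t\<^sup>2)"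
    unfolding \<psi>_def diag_state_trace sums(1) using \<alpha> by (simp add: norm_divide power_divide)
  then have "Re (qform d (P_omega d) \<psi>) = 1 / (real d * t_star \<alpha>)"
    unfolding qform_P_omega t_star_nat_floor[OF \<alpha>(1)] k_def[symmetric] t_def[symmetric] by simp
  with \<open>\<psi> \<in> V d \<alpha>\<close> show ?thesis by blast
qed

lemma f_d_eq:
  assumes "1 \<le> \<alpha>" "\<alpha> \<le> real d"
  shows "f_d d \<alpha> = 1 / (real d * t_star \<alpha>)"
proof -
  obtain \<psi> where "\<psi> \<in> V d \<alpha>" "Re (qform d (P_omega d) \<psi>) = 1 / (real d * t_star \<alpha>)"
    using admissible_qform_P_omega_attained[OF assms] by blast
  then have "1 / (real d * t_star \<alpha>) \<in> (\<lambda>\<psi>. Re (qform d (P_omega d) \<psi>)) ` V d \<alpha>" by force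
  then show ?thesis
    unfolding f_d_def mu_def
    by (rule cSup_eq_maximum) (use admissible_qform_P_omega_le[OF _ assms] in \<open>auto simp: V_def\<close>)
qed

section \<open>The Choi matrix of the maps Phi_t\<close>

lemma mtrace_matunit: "i < d \<Longrightarrow> j < d \<Longrightarrow> mtrace d (matunit d i j) = (if i = j then 1 else 0)"
proof -
  assume ij: "i < d" "j < d"
  have "mtrace d (matunit d i j) = (\<Sum>l<d. if l = i then (if i = j then 1 else 0) else 0)"
    unfolding mtrace_def matunit_def by (rule sum.cong) auto
  then show ?thesis using ij by simp
qed

lemma choi_Phi_t_index:
  assumes d: "d > 0" and p: "p < d*d" and q: "q < d*d"
  shows "choi d (Phi_t d t) $$ (p,q) =
    (if p = q then 1 else 0) - complex_of_real (t * real d) * P_omega d $$ (p,q)"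
proof -
  have pd: "p div d < d" "p mod d < d" and qd: "q div d < d" "q mod d < d"
    using p q d by (auto simp: less_mult_imp_div_less)
  have pq: "(p div d = q div d \<and> p mod d = q mod d) \<longleftrightarrow> p = q" by (metis div_mult_mod_eq)
  have choi: "choi d (Phi_t d t) $$ (p,q) =
      (if p div d = q div d then 1 else 0) * (if p mod d = q mod d then 1 else 0)
      - complex_of_real t * (if p mod d = p div d \<and> q mod d = q div d then 1 else 0)"
    unfolding choi_def Phi_t_def using p q pd qd by (simp add: mtrace_matunit, simp add: matunit_def)
  have "complex_of_real (1 / sqrt (real d)) * complex_of_real (1 / sqrt (real d)) =
      1 / complex_of_real (real d)"
    using d by (simp flip: of_real_mult)
  then have P: "P_omega d $$ (p,q) =
      (if p div d = p mod d \<and> q div d = q mod d then 1 / complex_of_real (real d) else 0)"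
    unfolding P_omega_def using p q by (simp add: omega_index)
  show ?thesis unfolding choi P using pq d by auto
qed

lemma qform_choi_Phi_t:
  assumes d: "d > 0" and u: "unit_vector d \<psi>"
  shows "Re (qform d (choi d (Phi_t d t)) \<psi>) = 1 - t * real d * Re (qform d (P_omega d) \<psi>)"
proof -
  have "qform d (choi d (Phi_t d t)) \<psi> = (\<Sum>a<d*d. \<Sum>b<d*d. cnj (\<psi> $ a) * (if a = b then 1 else 0) * \<psi> $ b
      - complex_of_real (t * real d) * (cnj (\<psi> $ a) * P_omega d $$ (a,b) * \<psi> $ b))"
    unfolding qform_def by (intro sum.cong refl) (auto simp: choi_Phi_t_index[OF d] algebra_simps)
  also have "\<dots> = (\<Sum>a<d*d. \<Sum>b<d*d. cnj (\<psi> $ a) * (if a = b then 1 else 0) * \<psi> $ b)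
      - complex_of_real (t * real d) * qform d (P_omega d) \<psi>"
    unfolding qform_def by (simp add: sum_subtractf sum_distrib_left)
  also have "(\<Sum>a<d*d. \<Sum>b<d*d. cnj (\<psi> $ a) * (if a = b then 1 else 0) * \<psi> $ b) =
      (\<Sum>a<d*d. complex_of_real ((cmod (\<psi> $ a))\<^sup>2))"
  proof (rule sum.cong[OF refl])
    fix a assume a: "a \<in> {..<d*d}"
    have "(\<Sum>b<d*d. cnj (\<psi> $ a) * (if a = b then 1 else 0) * \<psi> $ b) =
        (\<Sum>b<d*d. if b = a then cnj (\<psi> $ a) * \<psi> $ a else 0)"
      by (rule sum.cong) auto
    also have "\<dots> = cnj (\<psi> $ a) * \<psi> $ a" using a by simp
    also have "\<dots> = complex_of_real ((cmod (\<psi> $ a))\<^sup>2)"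
      by (simp add: complex_norm_square[symmetric] mult.commute)
    finally show "(\<Sum>b<d*d. cnj (\<psi> $ a) * (if a = b then 1 else 0) * \<psi> $ b) =
        complex_of_real ((cmod (\<psi> $ a))\<^sup>2)" .
  qed
  also have "\<dots> = 1"
    unfolding of_real_sum[symmetric] using u unfolding unit_vector_def by simp
  finally show ?thesis by simp
qed

lemma hermitian_preserving_Phi_t: "hermitian_preserving d (Phi_t d t)"
  unfolding hermitian_preserving_def
proof (intro ballI impI conjI)
  fix X assume X: "X \<in> carrier_mat d d" and herm: "hermitian_mat X"
  show carrier: "Phi_t d t X \<in> carrier_mat d d"
    unfolding Phi_t_def using X by (intro minus_carrier_mat smult_carrier_mat) auto
  have entry: "cnj (X $$ (j,i)) = X $$ (i,j)" if "i < d" "j < d" for i j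
    using arg_cong[OF herm[unfolded hermitian_mat_def], of "\<lambda>M. M $$ (i,j)"] that X by simp
  have trace: "cnj (mtrace d X) = mtrace d X" unfolding mtrace_def by (simp add: entry)
  show "hermitian_mat (Phi_t d t X)" unfolding hermitian_mat_def
    by (rule eq_matI, insert X carrier entry trace, auto simp: Phi_t_def)
qed

lemma Phi_t_in_P_class_iff:
  assumes d: "d > 0" and t: "t > 0" and \<alpha>: "1 \<le> \<alpha>" "\<alpha> \<le> real d"
  shows "Phi_t d t \<in> P_class d \<alpha> \<longleftrightarrow> t \<le> t_star \<alpha>"
proof -
  have "Phi_t d t \<in> P_class d \<alpha> \<longleftrightarrow> (\<forall>\<psi>\<in>V d \<alpha>. t * real d * Re (qform d (P_omega d) \<psi>) \<le> 1)"
    unfolding P_class_def using hermitian_preserving_Phi_t qform_choi_Phi_t[OF d]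
    by (auto simp: V_def admissible_def Let_def)
  also have "\<dots> \<longleftrightarrow> t * real d * (1 / (real d * t_star \<alpha>)) \<le> 1"
  proof
    assume "\<forall>\<psi>\<in>V d \<alpha>. t * real d * Re (qform d (P_omega d) \<psi>) \<le> 1"
    then show "t * real d * (1 / (real d * t_star \<alpha>)) \<le> 1"
      using admissible_qform_P_omega_attained[OF \<alpha>] by force
  next
    assume le: "t * real d * (1 / (real d * t_star \<alpha>)) \<le> 1"
    show "\<forall>\<psi>\<in>V d \<alpha>. t * real d * Re (qform d (P_omega d) \<psi>) \<le> 1"
    proof
      fix \<psi> assume "\<psi> \<in> V d \<alpha>"
      then have "Re (qform d (P_omega d) \<psi>) \<le> 1 / (real d * t_star \<alpha>)"
        using admissible_qform_P_omega_le[OF _ \<alpha>] by (simp add: V_def)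
      then have "t * real d * Re (qform d (P_omega d) \<psi>) \<le> t * real d * (1 / (real d * t_star \<alpha>))"
        using t by (intro mult_left_mono) auto
      with le show "t * real d * Re (qform d (P_omega d) \<psi>) \<le> 1" by linarith
    qed
  qed
  also have "\<dots> \<longleftrightarrow> t \<le> t_star \<alpha>"
    using d t_star_pos[OF \<alpha>(1)] by (simp add: field_simps)
  finally show ?thesis .
qed

theorem corollary4p8:
  fixes d :: nat
  assumes "d \<ge> 2"
  shows "(\<forall>\<alpha>\<in>{1..real d}. f_d d \<alpha> = 1 / (real d * t_star \<alpha>)) \<and>
         (\<forall>\<alpha>\<in>{1..real d}. \<forall>t\<in>{0<..1}.
            Phi_t d t \<in> P_class d \<alpha> \<longleftrightarrow> t \<le> 1 / (real d * f_d d \<alpha>))"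
proof (intro conjI ballI)
  fix \<alpha> assume "\<alpha> \<in> {1..real d}"
  then have \<alpha>: "1 \<le> \<alpha>" "\<alpha> \<le> real d" by auto
  show "f_d d \<alpha> = 1 / (real d * t_star \<alpha>)" by (rule f_d_eq[OF \<alpha>])
  have d: "d > 0" using assms by simp
  then have "1 / (real d * f_d d \<alpha>) = t_star \<alpha>" by (simp add: f_d_eq[OF \<alpha>])
  fix t :: real assume "t \<in> {0<..1}"
  then show "Phi_t d t \<in> P_class d \<alpha> \<longleftrightarrow> t \<le> 1 / (real d * f_d d \<alpha>)"
    using Phi_t_in_P_class_iff[OF d _ \<alpha>] \<open>1 / (real d * f_d d \<alpha>) = t_star \<alpha>\<close> by simp
qed

end
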